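(* Every multiset $A$ of $n$ real numbers with at least two distinct elements contains, as a submultiset, $m$ copies of a set of size $r$ for some positive integers $m,r$ with $r\ge2$ and $mr^3\ge M(A)/\log n$.
   Context: For a multiset $A$ of $n$ reals, its multiplicity profile $\mu(A)=(\mu_1,\ldots,\mu_\ell)$ is the partition of $n$ such that the $\ell$ distinct elements of $A$ occur with multiplicities $\mu_1\ge\cdots\ge\mu_\ell$, and $M(A)=\sum_{i=1}^{\ell}(i-1)^2\mu_i$. Here $\log$ is the natural logarithm. *)

theory Defs
  imports Complex_Main "HOL-Library.Multiset"
begin

definition mult_profile :: "'a multiset \<Rightarrow> nat list" where
  "mult_profile A = rev (sorted_list_of_multiset (image_mset (count A) (mset_set (set_mset A))))"

text \<open>M(A) = sum_{i=1}^{l} (i-1)^2 mu_i; with 0-based list index j = i-1.\<close>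
definition M_profile :: "'a multiset \<Rightarrow> nat" where
  "M_profile A = (let \<mu> = mult_profile A in \<Sum>j<length \<mu>. j^2 * \<mu> ! j)"

end

theory Submission
  imports Defs "HOL-Analysis.Harmonic_Numbers"
begin

text \<open>Let \<open>\<mu>\<^sub>1 \<ge> \<dots> \<ge> \<mu>\<^sub>\<ell>\<close> be the multiplicity profile of \<open>A\<close> and choose \<open>r \<in> {2..\<ell>}\<close>
  maximising \<open>K = \<mu>\<^sub>r r\<^sup>3\<close>. The \<open>r\<close> most frequent elements each occur at least \<open>\<mu>\<^sub>r\<close> times,
  so \<open>A\<close> contains \<open>\<mu>\<^sub>r\<close> copies of an \<open>r\<close>-set. On the other hand
  \<open>(i-1)\<^sup>2 \<mu>\<^sub>i \<le> \<mu>\<^sub>i i\<^sup>3 / i \<le> K / i\<close> for \<open>i \<ge> 2\<close>, hence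
  \<open>M(A) \<le> K (H\<^sub>\<ell> - 1) \<le> K ln \<ell> \<le> K ln n\<close>.\<close>

lemma harm_minus_one_le_ln:
  assumes "n > 0"
  shows "harm n - 1 \<le> ln (real n)"
  using euler_mascheroni_sequence_decreasing[of 1 n] assms by (simp add: harm_def)

lemma sum_inverse_Suc_le_ln: "(\<Sum>j\<in>{1..<n}. 1 / (real j + 1)) \<le> ln (real n)"
proof (cases "n = 0")
  case False
  then have "{..<n} = insert 0 {1..<n}" by auto
  then have "harm n = 1 + (\<Sum>j\<in>{1..<n}. 1 / (real j + 1))"
    by (simp add: harm_altdef field_simps)
  then show ?thesis using harm_minus_one_le_ln[of n] False by simp
qed simp

lemma weighted_square_sum_le_ln:
  fixes \<mu> :: "nat list" and K :: real
  assumes bound: "\<And>j. 1 \<le> j \<Longrightarrow> j < length \<mu> \<Longrightarrow> real (\<mu> ! j) * (real j + 1) ^ 3 \<le> K"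
  shows "real (\<Sum>j<length \<mu>. j\<^sup>2 * \<mu> ! j) \<le> K * ln (real (length \<mu>))"
proof -
  define l where "l = length \<mu>"
  have term_bound: "real (j\<^sup>2 * \<mu> ! j) \<le> K * (1 / (real j + 1))" if "j \<in> {1..<l}" for j
  proof -
    have "real j ^ 2 * (real j + 1) \<le> (real j + 1) ^ 3"
      by (simp add: power2_eq_square power3_eq_cube mult_mono)
    then have "real (\<mu> ! j) * (real j ^ 2 * (real j + 1)) \<le> real (\<mu> ! j) * (real j + 1) ^ 3"
      by (rule mult_left_mono) simp
    then have "real (j\<^sup>2 * \<mu> ! j) * (real j + 1) \<le> real (\<mu> ! j) * (real j + 1) ^ 3"
      by (simp add: algebra_simps)
    also have "\<dots> \<le> K" using bound that by (simp add: l_def)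
    finally show ?thesis by (simp add: field_simps)
  qed
  have "real (\<Sum>j<l. j\<^sup>2 * \<mu> ! j) = (\<Sum>j\<in>{1..<l}. real (j\<^sup>2 * \<mu> ! j))"
    by (simp add: of_nat_sum) (rule sum.mono_neutral_right; auto)
  also have "\<dots> \<le> (\<Sum>j\<in>{1..<l}. K * (1 / (real j + 1)))"
    by (rule sum_mono) (rule term_bound)
  also have "\<dots> = K * (\<Sum>j\<in>{1..<l}. 1 / (real j + 1))"
    by (simp add: sum_distrib_left)
  also have "\<dots> \<le> K * ln (real l)"
  proof (cases "l \<le> 1")
    case False
    then have "1 < l" by simp
    have "0 \<le> real (\<mu> ! 1) * (real 1 + 1) ^ 3" by simp
    also have "\<dots> \<le> K" using bound[of 1] \<open>1 < l\<close> by (simp add: l_def)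
    finally have "0 \<le> K" .
    with sum_inverse_Suc_le_ln show ?thesis by (rule mult_left_mono)
  qed (auto simp: le_Suc_eq)
  finally show ?thesis by (simp add: l_def)
qed

lemma card_set_mset_le_size: "card (set_mset A) \<le> size A"
  using size_mset_mono[OF mset_set_set_mset_msubset] by simp

lemma repeat_mset_mset_set_subseteq:
  assumes "finite S" and "\<And>x. x \<in> S \<Longrightarrow> m \<le> count A x"
  shows "repeat_mset m (mset_set S) \<subseteq># A"
proof (rule mset_subset_eqI)
  fix x
  show "count (repeat_mset m (mset_set S)) x \<le> count A x"
    using assms by (cases "x \<in> S") auto
qed

lemma mset_mult_profile:
  "mset (mult_profile A) = image_mset (count A) (mset_set (set_mset A))"
  by (simp add: mult_profile_def)

lemma length_mult_profile: "length (mult_profile A) = card (set_mset A)"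
  by (metis mset_mult_profile size_image_mset size_mset size_mset_set)

lemma mult_profile_nth_pos:
  assumes "j < length (mult_profile A)"
  shows "0 < mult_profile A ! j"
proof -
  have "mult_profile A ! j \<in># mset (mult_profile A)" using assms by simp
  then show ?thesis by (auto simp: mset_mult_profile)
qed

lemma sorted_wrt_mult_profile: "sorted_wrt (\<ge>) (mult_profile A)"
  by (simp add: mult_profile_def sorted_wrt_rev)

lemma card_count_ge_mult_profile_nth:
  assumes "j < length (mult_profile A)"
  shows "Suc j \<le> card {x \<in> set_mset A. mult_profile A ! j \<le> count A x}"
proof -
  define \<mu> where "\<mu> = mult_profile A"
  have "{..j} \<subseteq> {i. i < length \<mu> \<and> \<mu> ! j \<le> \<mu> ! i}"
    using assms sorted_wrt_nth_less[OF sorted_wrt_mult_profile[of A]]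
    by (fastforce simp: \<mu>_def le_eq_less_or_eq)
  then have "card {..j} \<le> card {i. i < length \<mu> \<and> \<mu> ! j \<le> \<mu> ! i}"
    by (rule card_mono[rotated]) simp
  then have "Suc j \<le> length (filter (\<lambda>y. \<mu> ! j \<le> y) \<mu>)"
    by (simp add: length_filter_conv_card)
  also have "\<dots> = size (filter_mset (\<lambda>y. \<mu> ! j \<le> y) (mset \<mu>))"
    by (metis mset_filter size_mset)
  also have "\<dots> = card {x \<in> set_mset A. \<mu> ! j \<le> count A x}"
    by (simp add: \<mu>_def mset_mult_profile filter_mset_image_mset)
  finally show ?thesis by (simp add: \<mu>_def)
qed

lemma repeat_mset_subseteq_mult_profile:
  assumes "j < length (mult_profile A)"
  obtains S where "finite S" "card S = Suc j"
    "repeat_mset (mult_profile A ! j) (mset_set S) \<subseteq># A"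
proof -
  obtain S where S: "S \<subseteq> {x \<in> set_mset A. mult_profile A ! j \<le> count A x}" "card S = Suc j"
    using card_count_ge_mult_profile_nth[OF assms] by (meson obtain_subset_with_card_n)
  have "finite S" using S(1) by (rule finite_subset) simp
  with S show ?thesis
    using repeat_mset_mset_set_subseteq[of S "mult_profile A ! j" A] that by auto
qed

theorem proposition2p9:
  fixes A :: "real multiset" and n :: nat
  assumes "size A = n"
    and "card (set_mset A) \<ge> 2"
  shows "\<exists>m r S. m > 0 \<and> r \<ge> 2 \<and> finite S \<and> card S = r
           \<and> repeat_mset m (mset_set S) \<subseteq># A
           \<and> real m * real r ^ 3 \<ge> real (M_profile A) / ln (real n)"
proof -
  define \<mu> where "\<mu> = mult_profile A"
  define f where "f j = real (\<mu> ! j) * (real j + 1) ^ 3" for j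
  have l: "2 \<le> length \<mu>" "length \<mu> \<le> n"
    using assms card_set_mset_le_size[of A] by (simp_all add: \<mu>_def length_mult_profile)
  obtain j where j: "j \<in> {1..<length \<mu>}" "Max (f ` {1..<length \<mu>}) = f j"
    using obtains_MAX[of "{1..<length \<mu>}" f] l by auto
  have f_max: "f i \<le> f j" if "i \<in> {1..<length \<mu>}" for i
    using that j(2) Max_ge[of "f ` {1..<length \<mu>}" "f i"] by simp
  have "real (M_profile A) \<le> f j * ln (real (length \<mu>))"
    unfolding M_profile_def Let_def \<mu>_def[symmetric]
    by (rule weighted_square_sum_le_ln) (use f_max in \<open>simp add: f_def\<close>)
  also have "\<dots> \<le> f j * ln (real n)"
    using l by (intro mult_left_mono ln_mono) (auto simp: f_def)
  finally have "real (M_profile A) / ln (real n) \<le> f j"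
    using l by (simp add: divide_le_eq)
  moreover obtain S where "finite S" "card S = Suc j" "repeat_mset (\<mu> ! j) (mset_set S) \<subseteq># A"
    using repeat_mset_subseteq_mult_profile j(1) by (auto simp: \<mu>_def)
  moreover have "0 < \<mu> ! j" using j(1) unfolding \<mu>_def by (simp add: mult_profile_nth_pos)
  ultimately show ?thesis
    using j(1) by (intro exI[of _ "\<mu> ! j"] exI[of _ "Suc j"]) (auto simp: f_def add.commute)
qed

end
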